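(* Let $J$ be a $\lambda$-admissible almost complex structure on $Q\times S^1$ and let $u=(w,f):\mathbb C\to Q\times S^1$ be an lcs instanton, regarding $\infty$ as a puncture of $\mathbb C=\mathbb CP^1\setminus\{\infty\}$. Suppose $\|dw\|_{C^0}<\infty$ and $$E^\pi(u)=0,\qquad E^\perp(u)<\infty .$$ Then $u$ is a constant map.
   Context: $(Q,\lambda)$ is a contact manifold with contact form $\lambda$, $\xi=\ker\lambda$, Reeb field $R_\lambda$, $\pi:TQ\to\xi$ the projection along $R_\lambda$. $S^1=\mathbb R/\mathbb Z$ with coordinate $\theta$, $\omega_\lambda=d\lambda+d\theta\wedge\lambda$, $\mathcal V=\mathrm{span}\{\partial_\theta,R_\lambda\}$. $J$ is $\lambda$-admissible if it is $\omega_\lambda$-tame, preserves $\xi$ and $\mathcal V$, and $J\partial_\theta=R_\lambda$; $J|_\xi$ is $d\lambda$-compatible, $Q$ has the metric $g=d\lambda(\cdot,J\cdot)|_\xi+\lambda\otimes\lambda$, and $\mathbb C$ its standard metric. An lcs instanton is $u=(w,f)$ with $\frac12(\pi dw+J\pi dw\circ j)=0$ and $w^*\lambda\circ j=f^*d\theta$. $E^\pi(u)=\frac12\int_{\mathbb C}|\pi dw|^2dA$. Since $\mathbb C$ is simply connected, $f^*d\theta=d\widetilde f$ for a lift $\widetilde f:\mathbb C\to\mathbb R$ of $f$. Let $\mathcal C$ be the set of smooth compactly supported functions $\varphi:\mathbb R\to\mathbb R_{\ge0}$ with $\int_{\mathbb R}\varphi=1$. The vertical energy is $E^\perp(u)=\sup_{\varphi\in\mathcal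 C}\int_{\mathbb C}\varphi(\widetilde f)\,d\widetilde f\wedge w^*\lambda$ (independent of the choice of lift). *)

theory Defs
  imports "HOL-Analysis.Analysis"
begin

fun iter_dd :: "'a::euclidean_space list \<Rightarrow> ('a \<Rightarrow> 'b::real_normed_vector) \<Rightarrow> 'a \<Rightarrow> 'b" where
  "iter_dd [] f = f"
| "iter_dd (v # vs) f = (\<lambda>x. frechet_derivative (iter_dd vs f) (at x) v)"

definition cinf_on :: "'a::euclidean_space set \<Rightarrow> ('a \<Rightarrow> 'b::real_normed_vector) \<Rightarrow> bool" where
  "cinf_on U f \<longleftrightarrow> open U \<and> (\<forall>vs. \<forall>x\<in>U. iter_dd vs f differentiable (at x))"

definition embedded_submanifold :: "'a::euclidean_space set \<Rightarrow> bool" where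
  "embedded_submanifold Q \<longleftrightarrow>
     (\<forall>q\<in>Q. \<exists>U V (\<psi>::'a \<Rightarrow> 'a) \<psi>i L. open U \<and> q \<in> U \<and> open V \<and>
        cinf_on U \<psi> \<and> cinf_on V \<psi>i \<and> \<psi> ` U = V \<and>
        (\<forall>x\<in>U. \<psi>i (\<psi> x) = x) \<and> (\<forall>y\<in>V. \<psi> (\<psi>i y) = y) \<and>
        subspace L \<and> \<psi> ` (Q \<inter> U) = V \<inter> L)"

definition tangent_space :: "'a::euclidean_space set \<Rightarrow> 'a \<Rightarrow> 'a set" where
  "tangent_space Q q = {v. \<exists>\<gamma>::real \<Rightarrow> 'a. cinf_on UNIV \<gamma> \<and> (\<forall>t. \<gamma> t \<in> Q) \<and> \<gamma> 0 = q \<and>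
      (\<gamma> has_vector_derivative v) (at 0)}"

text \<open>A 1-form on Q is the restriction of an ambient smooth 1-form x \<mapsto> (v \<mapsto> Lam x \<bullet> v).
  Its exterior derivative (restricted to tangent vectors):\<close>
definition dlam :: "('a::euclidean_space \<Rightarrow> 'a) \<Rightarrow> 'a \<Rightarrow> 'a \<Rightarrow> 'a \<Rightarrow> real" where
  "dlam Lam x v w = frechet_derivative Lam (at x) v \<bullet> w - frechet_derivative Lam (at x) w \<bullet> v"

definition xi :: "'a::euclidean_space set \<Rightarrow> ('a \<Rightarrow> 'a) \<Rightarrow> 'a \<Rightarrow> 'a set" where
  "xi Q Lam q = {v \<in> tangent_space Q q. Lam q \<bullet> v = 0}"

definition contact_manifold :: "'a::euclidean_space set \<Rightarrow> ('a \<Rightarrow> 'a) \<Rightarrow> bool" where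
  "contact_manifold Q Lam \<longleftrightarrow> embedded_submanifold Q \<and>
     (\<exists>W. open W \<and> Q \<subseteq> W \<and> cinf_on W Lam) \<and>
     (\<forall>q\<in>Q. (\<exists>v\<in>tangent_space Q q. Lam q \<bullet> v \<noteq> 0) \<and>
        (\<forall>v\<in>xi Q Lam q. v \<noteq> 0 \<longrightarrow> (\<exists>w\<in>xi Q Lam q. dlam Lam q v w \<noteq> 0)))"

definition reeb_field :: "'a::euclidean_space set \<Rightarrow> ('a \<Rightarrow> 'a) \<Rightarrow> ('a \<Rightarrow> 'a) \<Rightarrow> bool" where
  "reeb_field Q Lam R \<longleftrightarrow> (\<forall>q\<in>Q. R q \<in> tangent_space Q q \<and> Lam q \<bullet> R q = 1 \<and>
     (\<forall>v\<in>tangent_space Q q. dlam Lam q (R q) v = 0))"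

definition proj_xi :: "('a::euclidean_space \<Rightarrow> 'a) \<Rightarrow> ('a \<Rightarrow> 'a) \<Rightarrow> 'a \<Rightarrow> 'a \<Rightarrow> 'a" where
  "proj_xi Lam R q v = v - (Lam q \<bullet> v) *\<^sub>R R q"

text \<open>S^1 = R/Z is represented by the real coordinate theta; J q theta is an endomorphism of
  T_q Q \<times> R = T_(q,[theta]) (Q \<times> S^1), required to be 1-periodic in theta.
  The vector (0,1) is d/dtheta.\<close>

definition omega_lam :: "('a::euclidean_space \<Rightarrow> 'a) \<Rightarrow> 'a \<Rightarrow> 'a \<times> real \<Rightarrow> 'a \<times> real \<Rightarrow> real" where
  "omega_lam Lam q X Y = dlam Lam q (fst X) (fst Y) + snd X * (Lam q \<bullet> fst Y) - snd Y * (Lam q \<bullet> fst X)"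

definition lam_admissible ::
  "'a::euclidean_space set \<Rightarrow> ('a \<Rightarrow> 'a) \<Rightarrow> ('a \<Rightarrow> 'a) \<Rightarrow> ('a \<Rightarrow> real \<Rightarrow> 'a \<times> real \<Rightarrow> 'a \<times> real) \<Rightarrow> bool" where
  "lam_admissible Q Lam R J \<longleftrightarrow>
     \<comment> \<open>smooth almost complex structure (restriction of a smooth ambient field of endomorphisms)\<close>
     (\<exists>W. open W \<and> Q \<subseteq> W \<and> (\<forall>x\<in>W. \<forall>\<theta>. linear (J x \<theta>)) \<and>
          (\<forall>X. cinf_on (W \<times> UNIV) (\<lambda>p. J (fst p) (snd p) X))) \<and>
     (\<forall>q\<in>Q. \<forall>\<theta>.
        J q (\<theta> + 1) = J q \<theta> \<and>
        (\<forall>X \<in> tangent_space Q q \<times> UNIV. J q \<theta> X \<in> tangent_space Q q \<times> UNIV \<and> J q \<theta> (J q \<theta> X) = - X) \<and>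
        \<comment> \<open>omega_lambda-tame\<close>
        (\<forall>X \<in> tangent_space Q q \<times> UNIV. X \<noteq> 0 \<longrightarrow> omega_lam Lam q X (J q \<theta> X) > 0) \<and>
        \<comment> \<open>preserves xi\<close>
        (\<forall>v\<in>xi Q Lam q. J q \<theta> (v, 0) \<in> xi Q Lam q \<times> {0}) \<and>
        \<comment> \<open>preserves V = span {d/dtheta, R}, and J d/dtheta = R\<close>
        (\<forall>X \<in> span {(0, 1), (R q, 0)}. J q \<theta> X \<in> span {(0, 1), (R q, 0)}) \<and>
        J q \<theta> (0, 1) = (R q, 0) \<and>
        \<comment> \<open>J restricted to xi is d lambda-compatible\<close>
        (\<forall>v\<in>xi Q Lam q. \<forall>w\<in>xi Q Lam q.
            dlam Lam q (fst (J q \<theta> (v, 0))) (fst (J q \<theta> (w, 0))) = dlam Lam q v w) \<and>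
        (\<forall>v\<in>xi Q Lam q. v \<noteq> 0 \<longrightarrow> dlam Lam q v (fst (J q \<theta> (v, 0))) > 0))"

text \<open>Squared norm of v \<in> T_q Q for the metric g = d lambda(., J .)|xi + lambda \<otimes> lambda
  (J taken at the point (q, theta)).\<close>
definition gnorm2 :: "('a::euclidean_space \<Rightarrow> 'a) \<Rightarrow> ('a \<Rightarrow> 'a) \<Rightarrow> ('a \<Rightarrow> real \<Rightarrow> 'a \<times> real \<Rightarrow> 'a \<times> real)
    \<Rightarrow> 'a \<Rightarrow> real \<Rightarrow> 'a \<Rightarrow> real" where
  "gnorm2 Lam R J q \<theta> v =
     dlam Lam q (proj_xi Lam R q v) (fst (J q \<theta> (proj_xi Lam R q v, 0))) + (Lam q \<bullet> v)\<^sup>2"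

text \<open>ft is a (smooth) real lift of f, so f^* dtheta = d ft; j is multiplication by i.\<close>
definition lcs_instanton :: "'a::euclidean_space set \<Rightarrow> ('a \<Rightarrow> 'a) \<Rightarrow> ('a \<Rightarrow> 'a)
    \<Rightarrow> ('a \<Rightarrow> real \<Rightarrow> 'a \<times> real \<Rightarrow> 'a \<times> real) \<Rightarrow> (complex \<Rightarrow> 'a) \<Rightarrow> (complex \<Rightarrow> real) \<Rightarrow> bool" where
  "lcs_instanton Q Lam R J w ft \<longleftrightarrow>
     cinf_on UNIV w \<and> (\<forall>z. w z \<in> Q) \<and> cinf_on UNIV ft \<and>
     (\<forall>z v. proj_xi Lam R (w z) (frechet_derivative w (at z) v)
            + fst (J (w z) (ft z) (proj_xi Lam R (w z) (frechet_derivative w (at z) (\<i> * v)), 0)) = 0) \<and>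
     (\<forall>z v. Lam (w z) \<bullet> frechet_derivative w (at z) (\<i> * v) = frechet_derivative ft (at z) v)"

text \<open>Pointwise squared norm of dw (Hilbert-Schmidt, w.r.t. the standard metric on C and g on Q).\<close>
definition dw_norm2 where
  "dw_norm2 Lam R J w ft z =
     gnorm2 Lam R J (w z) (ft z) (frechet_derivative w (at z) 1)
   + gnorm2 Lam R J (w z) (ft z) (frechet_derivative w (at z) \<i>)"

definition pi_dw_norm2 where
  "pi_dw_norm2 Lam R J w ft z =
     gnorm2 Lam R J (w z) (ft z) (proj_xi Lam R (w z) (frechet_derivative w (at z) 1))
   + gnorm2 Lam R J (w z) (ft z) (proj_xi Lam R (w z) (frechet_derivative w (at z) \<i>))"

definition E_pi :: "_ \<Rightarrow> _ \<Rightarrow> _ \<Rightarrow> (complex \<Rightarrow> 'a::euclidean_space) \<Rightarrow> (complex \<Rightarrow> real) \<Rightarrow> ennreal" where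
  "E_pi Lam R J w ft = (\<integral>\<^sup>+ z. ennreal (pi_dw_norm2 Lam R J w ft z / 2) \<partial>lborel)"

definition test_fns :: "(real \<Rightarrow> real) set" where
  "test_fns = {\<phi>. cinf_on UNIV \<phi> \<and> (\<forall>t. \<phi> t \<ge> 0) \<and> compact (closure {t. \<phi> t \<noteq> 0}) \<and>
                 (\<phi> has_integral 1) UNIV}"

text \<open>(d ft \<and> w^* lambda)(d/dx, d/dy), the density of the 2-form w.r.t. dx dy.\<close>
definition vert_density where
  "vert_density Lam w ft z =
     frechet_derivative ft (at z) 1 * (Lam (w z) \<bullet> frechet_derivative w (at z) \<i>)
   - frechet_derivative ft (at z) \<i> * (Lam (w z) \<bullet> frechet_derivative w (at z) 1)"

definition E_perp :: "('a::euclidean_space \<Rightarrow> 'a) \<Rightarrow> (complex \<Rightarrow> 'a) \<Rightarrow> (complex \<Rightarrow> real) \<Rightarrow> ennreal" where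
  "E_perp Lam w ft = (SUP \<phi>\<in>test_fns. \<integral>\<^sup>+ z. ennreal (\<phi> (ft z) * vert_density Lam w ft z) \<partial>lborel)"

end

theory Submission
  imports Defs "HOL-Computational_Algebra.Polynomial" "HOL-Complex_Analysis.Complex_Analysis"
begin

text \<open>Write \<open>ft\<close> for the real lift of \<open>f\<close>. The instanton equations give \<open>ft\<^sub>x = \<lambda>(w\<^sub>y)\<close> and
  \<open>ft\<^sub>y = - \<lambda>(w\<^sub>x)\<close>, and together with the symmetry of the second derivatives of \<open>w\<close> this yields
  \<open>\<Delta> ft = d\<lambda>(w\<^sub>x, w\<^sub>y) = |\<pi> dw|\<^sup>2 / 2\<close>. Hence \<open>E\<^sup>\<pi>(u) = 0\<close> forces \<open>\<pi> dw = 0\<close> and makes \<open>ft\<close>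
  harmonic, with gradient bounded by \<open>|dw|\<close>; Liouville's theorem for \<open>ft\<^sub>x - i ft\<^sub>y\<close> shows that \<open>ft\<close>
  is affine. The vertical energy density is then \<open>\<phi>(ft)\<close> times the constant \<open>|\<nabla>ft|\<^sup>2\<close>, whose
  integral over the plane is infinite unless \<open>\<nabla>ft = 0\<close>. So \<open>ft\<close> is constant, \<open>\<lambda>(dw) = 0\<close> as
  well, hence \<open>dw = 0\<close>.\<close>

section \<open>Iterated derivatives\<close>

lemma frechet_derivative_eqI: "(f has_derivative f') (at x) \<Longrightarrow> frechet_derivative f (at x) = f'"
  by (metis frechet_derivative_at)

lemma cinf_on_UNIV_has_derivative:
  "cinf_on UNIV f \<Longrightarrow> (iter_dd vs f has_derivative frechet_derivative (iter_dd vs f) (at x)) (at x)"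
  unfolding cinf_on_def using frechet_derivative_works by blast

lemma iter_dd_const: "iter_dd vs (\<lambda>_. c) = (\<lambda>_. if vs = [] then c else 0)"
proof (induction vs)
  case (Cons v vs)
  have "frechet_derivative (\<lambda>_. b) (at x) = (\<lambda>_. 0)" for b :: 'b and x :: 'a
    by (rule frechet_derivative_eqI) simp
  then show ?case by (simp add: Cons.IH)
qed simp

lemma cinf_on_const: "cinf_on UNIV (\<lambda>_. c)"
  unfolding cinf_on_def iter_dd_const by simp

lemma zero_in_tangent_space: "q \<in> Q \<Longrightarrow> 0 \<in> tangent_space Q q"
  unfolding tangent_space_def using cinf_on_const by (auto intro!: exI[of _ "\<lambda>_. q"])

lemma iter_dd_along_line:
  assumes "cinf_on UNIV G"
  shows "iter_dd vs (\<lambda>t::real. G (z + t *\<^sub>R v)) = (\<lambda>t. iter_dd (map (\<lambda>s. s *\<^sub>R v) vs) G (z + t *\<^sub>R v))"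
proof (induction vs)
  case (Cons s vs)
  let ?H = "iter_dd (map (\<lambda>s. s *\<^sub>R v) vs) G"
  have "((\<lambda>t. ?H (z + t *\<^sub>R v)) has_derivative (\<lambda>h. frechet_derivative ?H (at (z + x *\<^sub>R v)) (h *\<^sub>R v))) (at x)" for x
    by (rule has_derivative_compose[OF _ cinf_on_UNIV_has_derivative[OF assms]])
       (auto intro!: derivative_eq_intros)
  then have "frechet_derivative (\<lambda>t. ?H (z + t *\<^sub>R v)) (at x) = (\<lambda>h. frechet_derivative ?H (at (z + x *\<^sub>R v)) (h *\<^sub>R v))" for x
    by (rule frechet_derivative_eqI)
  then show ?case by (simp add: Cons.IH)
qed simp

lemma cinf_on_along_line:
  assumes "cinf_on UNIV G" shows "cinf_on UNIV (\<lambda>t::real. G (z + t *\<^sub>R v))"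
  unfolding cinf_on_def iter_dd_along_line[OF assms]
proof (intro conjI allI ballI)
  fix vs and x :: real
  have "(\<lambda>t::real. z + t *\<^sub>R v) differentiable (at x)"
    by (intro derivative_intros)
  then show "(\<lambda>t. iter_dd (map (\<lambda>s. s *\<^sub>R v) vs) G (z + t *\<^sub>R v)) differentiable (at x)"
    using differentiable_chain_at[of "\<lambda>t. z + t *\<^sub>R v" x "iter_dd (map (\<lambda>s. s *\<^sub>R v) vs) G"] assms
    by (simp add: o_def cinf_on_def)
qed simp

lemma frechet_derivative_in_tangent_space:
  assumes "cinf_on UNIV w" and "\<And>z. w z \<in> Q"
  shows "frechet_derivative w (at z) v \<in> tangent_space Q (w z)"
  unfolding tangent_space_def
proof (intro CollectI exI conjI allI)
  show "cinf_on UNIV (\<lambda>t::real. w (z + t *\<^sub>R v))"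
    using cinf_on_along_line[OF assms(1)] .
  have "((\<lambda>t. z + t *\<^sub>R v) has_derivative (\<lambda>t. t *\<^sub>R v)) (at 0)"
    by (auto intro!: derivative_eq_intros)
  moreover have "(w has_derivative frechet_derivative w (at z)) (at (z + 0 *\<^sub>R v))"
    using cinf_on_UNIV_has_derivative[OF assms(1), of "[]" z] by simp
  ultimately have "((\<lambda>t. w (z + t *\<^sub>R v)) has_derivative (\<lambda>t. frechet_derivative w (at z) (t *\<^sub>R v))) (at 0)"
    by (rule has_derivative_compose)
  moreover have "linear (frechet_derivative w (at z))"
    using cinf_on_UNIV_has_derivative[OF assms(1), of "[]"] has_derivative_linear by auto
  ultimately show "((\<lambda>t. w (z + t *\<^sub>R v)) has_vector_derivative frechet_derivative w (at z) v) (at 0)"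
    by (simp add: has_vector_derivative_def linear_cmul)
qed (use assms(2) in auto)

lemma has_real_derivative_along_line:
  fixes H :: "'b::euclidean_space \<Rightarrow> real"
  assumes "\<And>x. H differentiable (at x)"
  shows "((\<lambda>s. H (a + s *\<^sub>R v)) has_real_derivative frechet_derivative H (at (a + s *\<^sub>R v)) v) (at s)"
proof -
  have "((\<lambda>t. a + t *\<^sub>R v) has_derivative (\<lambda>t. t *\<^sub>R v)) (at s)"
    by (auto intro!: derivative_eq_intros)
  moreover have "(H has_derivative frechet_derivative H (at (a + s *\<^sub>R v))) (at (a + s *\<^sub>R v))"
    using assms frechet_derivative_works by blast
  ultimately have "((\<lambda>s. H (a + s *\<^sub>R v)) has_derivative (\<lambda>h. frechet_derivative H (at (a + s *\<^sub>R v)) (h *\<^sub>R v))) (at s)"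
    by (rule has_derivative_compose)
  moreover have "linear (frechet_derivative H (at (a + s *\<^sub>R v)))"
    using assms frechet_derivative_works has_derivative_linear by blast
  then have "(\<lambda>h. frechet_derivative H (at (a + s *\<^sub>R v)) (h *\<^sub>R v)) = (\<lambda>h. frechet_derivative H (at (a + s *\<^sub>R v)) v * h)"
    by (simp add: fun_eq_iff linear_cmul)
  ultimately show ?thesis
    by (simp add: has_field_derivative_def)
qed

lemma second_difference_mean_value:
  fixes g :: "'b::euclidean_space \<Rightarrow> real"
  assumes g: "cinf_on UNIV g" and h: "h > 0"
  shows "\<exists>p. dist p z \<le> h * (norm v1 + norm v2) \<and>
    g (z + h *\<^sub>R v1 + h *\<^sub>R v2) - g (z + h *\<^sub>R v1) - g (z + h *\<^sub>R v2) + g z = h * h * iter_dd [v2, v1] g p"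
proof -
  have dg: "\<And>x. iter_dd vs g differentiable (at x)" for vs
    using g unfolding cinf_on_def by blast
  let ?\<phi> = "\<lambda>s. g (z + h *\<^sub>R v2 + s *\<^sub>R v1) - g (z + s *\<^sub>R v1)"
  let ?\<phi>' = "\<lambda>s. iter_dd [v1] g (z + h *\<^sub>R v2 + s *\<^sub>R v1) - iter_dd [v1] g (z + s *\<^sub>R v1)"
  have "(?\<phi> has_real_derivative ?\<phi>' s) (at s)" for s
    using dg[of "[]"] by (simp only: iter_dd.simps) (intro DERIV_diff has_real_derivative_along_line)
  then obtain \<xi> where \<xi>: "0 < \<xi>" "\<xi> < h" "?\<phi> h - ?\<phi> 0 = h * ?\<phi>' \<xi>"
    using MVT2[OF h, of ?\<phi> ?\<phi>'] by auto
  let ?\<psi> = "\<lambda>t. iter_dd [v1] g (z + \<xi> *\<^sub>R v1 + t *\<^sub>R v2)"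
  let ?\<psi>' = "\<lambda>t. iter_dd [v2, v1] g (z + \<xi> *\<^sub>R v1 + t *\<^sub>R v2)"
  have "(?\<psi> has_real_derivative ?\<psi>' t) (at t)" for t
    using dg[of "[v1]"] by (simp only: iter_dd.simps(2)[of v2]) (rule has_real_derivative_along_line)
  then obtain \<eta> where \<eta>: "0 < \<eta>" "\<eta> < h"
    "?\<psi> h - ?\<psi> 0 = h * iter_dd [v2, v1] g (z + \<xi> *\<^sub>R v1 + \<eta> *\<^sub>R v2)"
    using MVT2[OF h, of ?\<psi> ?\<psi>'] by auto
  have "dist (z + \<xi> *\<^sub>R v1 + \<eta> *\<^sub>R v2) z \<le> \<xi> * norm v1 + \<eta> * norm v2"
    using \<xi> \<eta> norm_triangle_ineq[of "\<xi> *\<^sub>R v1" "\<eta> *\<^sub>R v2"] by (simp add: dist_norm)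
  also have "\<dots> \<le> h * (norm v1 + norm v2)"
    using \<xi> \<eta> by (simp add: distrib_left add_mono mult_right_mono)
  finally show ?thesis
    using \<xi>(3) \<eta>(3) by (intro exI[of _ "z + \<xi> *\<^sub>R v1 + \<eta> *\<^sub>R v2"]) (simp add: algebra_simps)
qed

lemma tendsto_at_right_0_if_dist_le:
  assumes "\<And>h. 0 < h \<Longrightarrow> dist (r h) z \<le> h * C"
  shows "(r \<longlongrightarrow> z) (at_right 0)"
proof -
  have "\<forall>\<^sub>F h in at_right 0. norm (dist (r h) z) \<le> h * C"
    using eventually_at_right_less[of 0] by eventually_elim (simp add: assms)
  moreover have "((\<lambda>h. h * C) \<longlongrightarrow> 0 * C) (at_right 0)"
    by (intro tendsto_intros)
  ultimately have "((\<lambda>h. dist (r h) z) \<longlongrightarrow> 0) (at_right 0)"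
    by (simp add: Lim_null_comparison)
  then show ?thesis
    by (rule tendsto_dist_iff[THEN iffD2])
qed

text \<open>Schwarz: by the mean value theorem, the second difference quotient at scale \<open>h\<close> is a value
  of either mixed derivative at a point within \<open>O(h)\<close> of \<open>z\<close>.\<close>
lemma iter_dd_swap_real:
  fixes g :: "'b::euclidean_space \<Rightarrow> real"
  assumes g: "cinf_on UNIV g"
  shows "iter_dd [v2, v1] g z = iter_dd [v1, v2] g z"
proof -
  define \<Delta> where "\<Delta> h = g (z + h *\<^sub>R v1 + h *\<^sub>R v2) - g (z + h *\<^sub>R v1) - g (z + h *\<^sub>R v2) + g z" for h
  have "\<forall>h. \<exists>p. 0 < h \<longrightarrow> dist p z \<le> h * (norm v1 + norm v2) \<and> \<Delta> h = h * h * iter_dd [v2, v1] g p"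
    unfolding \<Delta>_def using second_difference_mean_value[OF g, of _ z v1 v2] by blast
  from choice[OF this] obtain p
    where p: "\<forall>h. 0 < h \<longrightarrow> dist (p h) z \<le> h * (norm v1 + norm v2) \<and> \<Delta> h = h * h * iter_dd [v2, v1] g (p h)"
    by blast
  have \<Delta>_swap: "\<Delta> h = g (z + h *\<^sub>R v2 + h *\<^sub>R v1) - g (z + h *\<^sub>R v2) - g (z + h *\<^sub>R v1) + g z" for h
    by (simp add: \<Delta>_def add.commute add.left_commute)
  have "\<forall>h. \<exists>q. 0 < h \<longrightarrow> dist q z \<le> h * (norm v2 + norm v1) \<and> \<Delta> h = h * h * iter_dd [v1, v2] g q"
    unfolding \<Delta>_swap using second_difference_mean_value[OF g, of _ z v2 v1] by blast
  from choice[OF this] obtain q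
    where q: "\<forall>h. 0 < h \<longrightarrow> dist (q h) z \<le> h * (norm v2 + norm v1) \<and> \<Delta> h = h * h * iter_dd [v1, v2] g (q h)"
    by blast
  have cont: "isCont (iter_dd vs g) z" for vs
    using g unfolding cinf_on_def by (blast intro: differentiable_imp_continuous_within)
  have lim_p: "((\<lambda>h. iter_dd [v2, v1] g (p h)) \<longlongrightarrow> iter_dd [v2, v1] g z) (at_right 0)"
    using p by (intro isCont_tendsto_compose[OF cont] tendsto_at_right_0_if_dist_le) blast
  have "((\<lambda>h. iter_dd [v1, v2] g (q h)) \<longlongrightarrow> iter_dd [v1, v2] g z) (at_right 0)"
    using q by (intro isCont_tendsto_compose[OF cont] tendsto_at_right_0_if_dist_le) blast
  moreover have "\<forall>\<^sub>F h in at_right 0. iter_dd [v1, v2] g (q h) = iter_dd [v2, v1] g (p h)"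
    using eventually_at_right_less[of 0] by eventually_elim (use p q in simp)
  ultimately have "((\<lambda>h. iter_dd [v2, v1] g (p h)) \<longlongrightarrow> iter_dd [v1, v2] g z) (at_right 0)"
    by (rule Lim_transform_eventually)
  with lim_p show ?thesis
    using tendsto_unique[OF trivial_limit_at_right_real] by blast
qed

lemma iter_dd_inner_left:
  fixes G :: "'b::euclidean_space \<Rightarrow> 'c::real_inner"
  assumes "cinf_on UNIV G"
  shows "iter_dd vs (\<lambda>z. c \<bullet> G z) = (\<lambda>z. c \<bullet> iter_dd vs G z)"
proof (induction vs)
  case (Cons v vs)
  have "((\<lambda>z. c \<bullet> iter_dd vs G z) has_derivative (\<lambda>h. c \<bullet> frechet_derivative (iter_dd vs G) (at x) h)) (at x)" for x
    using cinf_on_UNIV_has_derivative[OF assms] by (rule has_derivative_inner_right)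
  then have "frechet_derivative (\<lambda>z. c \<bullet> iter_dd vs G z) (at x) = (\<lambda>h. c \<bullet> frechet_derivative (iter_dd vs G) (at x) h)" for x
    by (rule frechet_derivative_eqI)
  then show ?case by (simp add: Cons.IH)
qed simp

lemma cinf_on_inner_left:
  fixes G :: "'b::euclidean_space \<Rightarrow> 'c::real_inner"
  assumes "cinf_on UNIV G"
  shows "cinf_on UNIV (\<lambda>z. c \<bullet> G z)"
  unfolding cinf_on_def iter_dd_inner_left[OF assms]
  using has_derivative_inner_right[OF cinf_on_UNIV_has_derivative[OF assms]] differentiableI by blast

lemma iter_dd_swap:
  fixes G :: "'b::euclidean_space \<Rightarrow> 'c::euclidean_space"
  assumes "cinf_on UNIV G"
  shows "iter_dd [v2, v1] G z = iter_dd [v1, v2] G z"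
proof -
  define c where "c = iter_dd [v2, v1] G z - iter_dd [v1, v2] G z"
  have "iter_dd [v2, v1] (\<lambda>z. c \<bullet> G z) z = iter_dd [v1, v2] (\<lambda>z. c \<bullet> G z) z"
    by (rule iter_dd_swap_real[OF cinf_on_inner_left[OF assms]])
  then have "c \<bullet> c = 0"
    by (simp add: iter_dd_inner_left[OF assms] c_def inner_diff_right)
  then show ?thesis by (simp add: c_def)
qed

section \<open>A smooth test function\<close>

definition smooth_real :: "(real \<Rightarrow> real) \<Rightarrow> bool" where
  "smooth_real f \<longleftrightarrow> (\<exists>D. D 0 = f \<and> (\<forall>n x. (D n has_real_derivative D (Suc n) x) (at x)))"

lemma smooth_real_imp_cinf_on:
  assumes "smooth_real f" shows "cinf_on UNIV f"
proof -
  obtain D where D0: "D 0 = f" and DD: "\<And>n x. (D n has_real_derivative D (Suc n) x) (at x)"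
    using assms unfolding smooth_real_def by blast
  have deriv: "((\<lambda>x. c * D n x) has_real_derivative c * D (Suc n) x) (at x)" for c n x
    using DD by (intro DERIV_cmult)
  have iter: "iter_dd vs f = (\<lambda>x. prod_list vs * D (length vs) x)" for vs
  proof (induction vs)
    case Nil
    then show ?case using D0 by simp
  next
    case (Cons v vs)
    have "frechet_derivative (\<lambda>x. prod_list vs * D (length vs) x) (at x)
        = (\<lambda>h. prod_list vs * D (Suc (length vs)) x * h)" for x
      using deriv unfolding has_field_derivative_def by (rule frechet_derivative_eqI)
    then show ?case by (simp add: Cons.IH fun_eq_iff mult_ac)
  qed
  show ?thesis
    unfolding cinf_on_def iter using deriv real_differentiable_def differentiableI by blast
qed

lemma smooth_real_cmult: "smooth_real f \<Longrightarrow> smooth_real (\<lambda>t. c * f t)"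
  unfolding smooth_real_def
proof (elim exE conjE)
  fix D assume "D 0 = f" "\<forall>n x. (D n has_real_derivative D (Suc n) x) (at x)"
  then show "\<exists>D. D 0 = (\<lambda>t. c * f t) \<and> (\<forall>n x. (D n has_real_derivative D (Suc n) x) (at x))"
    by (intro exI[of _ "\<lambda>n t. c * D n t"]) (auto intro: DERIV_cmult)
qed

text \<open>This family is closed
  under differentiation, which makes each member smooth.\<close>
definition exp_bump :: "real poly \<Rightarrow> nat \<Rightarrow> real \<Rightarrow> real" where
  "exp_bump P k t = (if t\<^sup>2 < 1 then poly P t * (exp (- 1 / (1 - t\<^sup>2)) / (1 - t\<^sup>2) ^ k) else 0)"

definition exp_bump_deriv_poly :: "real poly \<Rightarrow> nat \<Rightarrow> real poly" where
  "exp_bump_deriv_poly P k = pderiv P * [:1, 0, -1:]\<^sup>2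
     + smult (2 * real k) ([:0, 1:] * P * [:1, 0, -1:]) - smult 2 ([:0, 1:] * P)"

lemma tendsto_exp_neg_inverse_div_power:
  "((\<lambda>s::real. if 0 < s then exp (- 1 / s) / s ^ m else 0) \<longlongrightarrow> 0) (at 0)"
proof (subst filterlim_at_split, rule conjI)
  show "((\<lambda>s::real. if 0 < s then exp (- 1 / s) / s ^ m else 0) \<longlongrightarrow> 0) (at_left 0)"
    by (rule tendsto_eventually) (auto intro!: eventually_at_leftI[of "-1"])
next
  have "((\<lambda>s. inverse s ^ m / exp (inverse s)) \<longlongrightarrow> 0) (at_right (0::real))"
    by (rule filterlim_compose[OF tendsto_power_div_exp_0 filterlim_inverse_at_top_right])
  moreover have "\<forall>\<^sub>F s in at_right (0::real).
      inverse s ^ m / exp (inverse s) = (if 0 < s then exp (- 1 / s) / s ^ m else 0)"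
    by (rule eventually_at_rightI[of 0 1]) (auto simp: exp_minus field_simps)
  ultimately show "((\<lambda>s::real. if 0 < s then exp (- 1 / s) / s ^ m else 0) \<longlongrightarrow> 0) (at_right 0)"
    by (rule Lim_transform_eventually)
qed

lemma exp_bump_tendsto_0:
  assumes "t\<^sup>2 = 1" shows "(exp_bump P k \<longlongrightarrow> 0) (at t)"
proof -
  define G where "G = (\<lambda>s::real. if 0 < s then exp (- 1 / s) / s ^ k else 0)"
  have "isCont G 0"
    using tendsto_exp_neg_inverse_div_power[of k] by (simp add: isCont_def G_def)
  then have "((\<lambda>x. G (1 - x\<^sup>2)) \<longlongrightarrow> G (1 - t\<^sup>2)) (at t)"
    using assms by (intro isCont_tendsto_compose[where g=G] tendsto_intros) auto
  then have "((\<lambda>x. poly P x * G (1 - x\<^sup>2)) \<longlongrightarrow> poly P t * 0) (at t)"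
    using assms by (intro tendsto_mult) (auto simp: G_def intro: isCont_tendsto_compose[where g="poly P"])
  moreover have "exp_bump P k = (\<lambda>x. poly P x * G (1 - x\<^sup>2))"
    by (simp add: fun_eq_iff exp_bump_def G_def)
  ultimately show ?thesis by simp
qed

lemma has_real_derivative_exp_neg_inverse_div_power:
  assumes "(s has_real_derivative s') (at t)" and "s t \<noteq> 0"
  shows "((\<lambda>x. exp (- 1 / s x) / s x ^ k) has_real_derivative
           exp (- 1 / s t) * s' * (1 - real k * s t) / s t ^ (k + 2)) (at t)"
  apply (rule derivative_eq_intros assms refl | simp add: assms)+
  apply (cases k)
   apply (simp_all add: field_simps power2_eq_square assms)
  done

lemma poly_exp_bump_deriv_poly:
  "poly (exp_bump_deriv_poly P k) t
     = poly (pderiv P) t * (1 - t\<^sup>2)\<^sup>2 + 2 * real k * t * poly P t * (1 - t\<^sup>2) - 2 * t * poly P t"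
  by (simp add: exp_bump_deriv_poly_def algebra_simps power2_eq_square)

lemma has_real_derivative_exp_bump_interior:
  assumes "t\<^sup>2 < 1"
  shows "((\<lambda>t. poly P t * (exp (- 1 / (1 - t\<^sup>2)) / (1 - t\<^sup>2) ^ k)) has_real_derivative
           poly (exp_bump_deriv_poly P k) t * (exp (- 1 / (1 - t\<^sup>2)) / (1 - t\<^sup>2) ^ (k + 2))) (at t)"
proof -
  define s where "s = 1 - t\<^sup>2"
  have s: "s \<noteq> 0" using assms by (simp add: s_def)
  have "((\<lambda>x. 1 - x\<^sup>2) has_real_derivative - 2 * t) (at t)"
    by (rule derivative_eq_intros refl | simp)+
  from has_real_derivative_exp_neg_inverse_div_power[OF this, of k]
  have "((\<lambda>x. exp (- 1 / (1 - x\<^sup>2)) / (1 - x\<^sup>2) ^ k) has_real_derivative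
      exp (- 1 / s) * (- 2 * t) * (1 - real k * s) / s ^ (k + 2)) (at t)"
    using s by (simp add: s_def)
  from DERIV_mult[OF poly_DERIV this]
  have "((\<lambda>x. poly P x * (exp (- 1 / (1 - x\<^sup>2)) / (1 - x\<^sup>2) ^ k)) has_real_derivative
      poly (pderiv P) t * (exp (- 1 / s) / s ^ k)
      + exp (- 1 / s) * (- 2 * t) * (1 - real k * s) / s ^ (k + 2) * poly P t) (at t)"
    by (simp add: s_def)
  moreover have "poly (pderiv P) t * (exp (- 1 / s) / s ^ k)
      + exp (- 1 / s) * (- 2 * t) * (1 - real k * s) / s ^ (k + 2) * poly P t
      = poly (exp_bump_deriv_poly P k) t * (exp (- 1 / s) / s ^ (k + 2))"
    unfolding poly_exp_bump_deriv_poly s_def[symmetric] using s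
    by (simp add: field_simps power2_eq_square)
  ultimately show ?thesis by (simp add: s_def)
qed

lemma has_real_derivative_exp_bump_boundary:
  assumes t: "t\<^sup>2 = 1"
  shows "(exp_bump P k has_real_derivative exp_bump (exp_bump_deriv_poly P k) (k + 2) t) (at t)"
proof -
  have quotient: "exp_bump P k (t + h) / h = exp_bump P (k + 1) (t + h) * - (2 * t + h)"
    if "h \<noteq> 0" for h
  proof (cases "(t + h)\<^sup>2 < 1")
    case True
    define S where "S = 1 - (t + h)\<^sup>2"
    have "S \<noteq> 0" using True by (simp add: S_def)
    have slope: "- (2 * t + h) = S / h"
      using t \<open>h \<noteq> 0\<close> by (simp add: S_def field_simps power2_eq_square)
    show ?thesis
      unfolding exp_bump_def S_def[symmetric] slope
      using True \<open>S \<noteq> 0\<close> \<open>h \<noteq> 0\<close> by (simp add: field_simps)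
  qed (simp add: exp_bump_def)
  have vanish: "exp_bump Q m t = 0" for Q m
    using t by (simp add: exp_bump_def)
  have "((\<lambda>h. exp_bump P (k + 1) (t + h) * - (2 * t + h)) \<longlongrightarrow> 0 * - (2 * t + 0)) (at 0)"
    by (intro tendsto_intros LIM_offset_zero exp_bump_tendsto_0 t)
  moreover have "\<forall>\<^sub>F h in at 0. exp_bump P (k + 1) (t + h) * - (2 * t + h)
      = (exp_bump P k (t + h) - exp_bump P k t) / h"
    by (simp add: eventually_at_filter quotient vanish)
  ultimately have "((\<lambda>h. (exp_bump P k (t + h) - exp_bump P k t) / h) \<longlongrightarrow> 0) (at 0)"
    by (simp add: Lim_transform_eventually)
  then show ?thesis
    by (simp add: DERIV_def vanish)
qed

lemma has_real_derivative_exp_bump: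
  "(exp_bump P k has_real_derivative exp_bump (exp_bump_deriv_poly P k) (k + 2) t) (at t)"
proof -
  consider "t\<^sup>2 < 1" | "1 < t\<^sup>2" | "t\<^sup>2 = 1"
    by linarith
  then show ?thesis
  proof cases
    case 1
    have "open {x::real. x\<^sup>2 < 1}"
      by (intro open_Collect_less continuous_intros)
    with 1 show ?thesis
      using has_field_derivative_transform_within_open[OF has_real_derivative_exp_bump_interior]
      by (fastforce simp: exp_bump_def)
  next
    case 2
    have "open {x::real. 1 < x\<^sup>2}"
      by (intro open_Collect_less continuous_intros)
    moreover have "exp_bump (exp_bump_deriv_poly P k) (k + 2) t = 0"
      using 2 by (simp add: exp_bump_def)
    ultimately show ?thesis
      using 2 has_field_derivative_transform_within_open[OF DERIV_const[of 0]]
      by (fastforce simp: exp_bump_def)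
  next
    case 3
    then show ?thesis
      by (rule has_real_derivative_exp_bump_boundary)
  qed
qed

lemma smooth_real_exp_bump: "smooth_real (exp_bump P k)"
proof -
  define step where "step = (\<lambda>(P, k). (exp_bump_deriv_poly P k, k + 2))"
  show ?thesis
    unfolding smooth_real_def
    using has_real_derivative_exp_bump
    by (intro exI[of _ "\<lambda>n. case_prod exp_bump ((step ^^ n) (P, k))"]) (simp add: step_def split_beta)
qed

lemma test_fns_nonempty: "test_fns \<noteq> {}"
proof -
  define bump where "bump = exp_bump [:1:] 0"
  have bump_nonneg: "0 \<le> bump t" for t
    by (simp add: bump_def exp_bump_def)
  have bump_support: "{t. bump t \<noteq> 0} \<subseteq> {-1..1}"
    by (auto simp: bump_def exp_bump_def abs_square_less_1 less_imp_le)
  have bump_cont: "continuous_on S bump" for S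
    unfolding bump_def
    by (intro continuous_at_imp_continuous_on ballI DERIV_isCont[OF has_real_derivative_exp_bump])
  define c where "c = integral {-1..1} bump"
  have bump_integral_Icc: "(bump has_integral c) {-1..1}"
    unfolding c_def by (intro integrable_integral integrable_continuous_interval bump_cont)
  then have bump_integral: "(bump has_integral c) UNIV"
    by (rule has_integral_on_superset) (use bump_support in auto)
  have "bump 0 \<noteq> 0"
    by (simp add: bump_def exp_bump_def)
  then have "c \<noteq> 0"
    using integral_eq_0_iff[OF bump_cont, of "-1" 1] bump_nonneg unfolding c_def by force
  moreover have "0 \<le> c"
    using has_integral_nonneg[OF bump_integral_Icc] bump_nonneg by blast
  ultimately have "0 < c" by simp
  have "(\<lambda>t. (1 / c) * bump t) \<in> test_fns"
    unfolding test_fns_def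
  proof (intro CollectI conjI allI)
    show "cinf_on UNIV (\<lambda>t. (1 / c) * bump t)"
      unfolding bump_def by (intro smooth_real_imp_cinf_on smooth_real_cmult smooth_real_exp_bump)
    show "0 \<le> (1 / c) * bump t" for t
      using \<open>0 < c\<close> bump_nonneg by simp
    have "{t. (1 / c) * bump t \<noteq> 0} \<subseteq> {-1..1}"
      using bump_support by auto
    then show "compact (closure {t. (1 / c) * bump t \<noteq> 0})"
      by (simp add: bounded_subset[OF bounded_closed_interval])
    show "((\<lambda>t. (1 / c) * bump t) has_integral 1) UNIV"
      using has_integral_mult_right[OF bump_integral, of "1 / c"] \<open>c \<noteq> 0\<close> by simp
  qed
  then show ?thesis by blast
qed

section \<open>Harmonic functions with bounded gradient\<close>

lemma linear_complex_decompose: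
  fixes L :: "complex \<Rightarrow> 'b::real_vector"
  assumes "linear L"
  shows "L h = Re h *\<^sub>R L 1 + Im h *\<^sub>R L \<i>"
proof -
  have "h = Re h *\<^sub>R 1 + Im h *\<^sub>R \<i>" by (simp add: complex_eq_iff)
  then have "L h = L (Re h *\<^sub>R 1 + Im h *\<^sub>R \<i>)" by simp
  then show ?thesis by (simp add: linear_add[OF assms] linear_cmul[OF assms])
qed

text \<open>The Cauchy-Riemann equations for \<open>u\<^sub>x - i u\<^sub>y\<close> are harmonicity of \<open>u\<close> and
  symmetry of its mixed second derivatives.\<close>
lemma harmonic_gradient_holomorphic:
  fixes u :: "complex \<Rightarrow> real"
  assumes u: "cinf_on UNIV u"
    and harmonic: "\<And>z. iter_dd [1, 1] u z + iter_dd [\<i>, \<i>] u z = 0"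
  shows "(\<lambda>z. Complex (iter_dd [1] u z) (- iter_dd [\<i>] u z)) holomorphic_on UNIV"
proof -
  define A B where "A = iter_dd [1] u" and "B = iter_dd [\<i>] u"
  define DA DB where "DA z = frechet_derivative A (at z)" and "DB z = frechet_derivative B (at z)" for z
  have A: "(A has_derivative DA z) (at z)" and B: "(B has_derivative DB z) (at z)" for z
    unfolding A_def B_def DA_def DB_def by (intro cinf_on_UNIV_has_derivative u)+
  have "((\<lambda>z. Complex (A z) (- B z)) has_field_derivative Complex (DA z 1) (- DB z 1)) (at z)" for z
  proof -
    have deriv: "((\<lambda>z. Complex (A z) (- B z)) has_derivative (\<lambda>h. of_real (DA z h) - \<i> * of_real (DB z h))) (at z)"
      unfolding Complex_eq by (intro derivative_eq_intros) (auto intro: A B)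
    have swap: "DA z \<i> = DB z 1"
      using iter_dd_swap_real[OF u, of \<i> 1 z] by (simp add: A_def B_def DA_def DB_def)
    have harm: "DA z 1 = - DB z \<i>"
      using harmonic[of z] by (simp add: A_def B_def DA_def DB_def eq_neg_iff_add_eq_0)
    show ?thesis
    proof (rule has_derivative_imp_has_field_derivative[OF deriv])
      fix h :: complex
      show "h * Complex (DA z 1) (- DB z 1) = of_real (DA z h) - \<i> * of_real (DB z h)"
        unfolding linear_complex_decompose[OF has_derivative_linear[OF A[of z]], of h]
          linear_complex_decompose[OF has_derivative_linear[OF B[of z]], of h]
        using swap harm by (simp add: complex_eq_iff algebra_simps)
    qed
  qed
  then show ?thesis
    unfolding holomorphic_on_def field_differentiable_def A_def B_def by blast
qed

lemma affine_if_constant_partials: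
  fixes u :: "complex \<Rightarrow> real"
  assumes u: "cinf_on UNIV u" and "\<And>z. iter_dd [1] u z = \<alpha>" and "\<And>z. iter_dd [\<i>] u z = \<beta>"
  shows "\<exists>c. \<forall>z. u z = c + \<alpha> * Re z + \<beta> * Im z"
proof -
  have Du: "frechet_derivative u (at z) h = \<alpha> * Re h + \<beta> * Im h" for z h
    using linear_complex_decompose[OF has_derivative_linear[OF cinf_on_UNIV_has_derivative[OF u, of "[]" z]], of h]
      assms(2,3) by (simp add: mult.commute)
  have "((\<lambda>z. u z - (\<alpha> * Re z + \<beta> * Im z)) has_derivative
      (\<lambda>h. frechet_derivative u (at z) h - (\<alpha> * Re h + \<beta> * Im h))) (at z)" for z
    using cinf_on_UNIV_has_derivative[OF u, of "[]" z] by (intro derivative_intros) simp_all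
  then have "((\<lambda>z. u z - (\<alpha> * Re z + \<beta> * Im z)) has_derivative (\<lambda>h. 0)) (at z within UNIV)" for z
    by (simp add: Du)
  then obtain c where c: "\<forall>z\<in>UNIV. u z - (\<alpha> * Re z + \<beta> * Im z) = c"
    using has_derivative_zero_constant[OF convex_UNIV, of "\<lambda>z. u z - (\<alpha> * Re z + \<beta> * Im z)"]
    by blast
  have "u z = c + \<alpha> * Re z + \<beta> * Im z" for z
    using c[rule_format, of z] by (simp add: algebra_simps)
  then show ?thesis by blast
qed

lemma harmonic_bounded_gradient_affine:
  fixes u :: "complex \<Rightarrow> real"
  assumes u: "cinf_on UNIV u"
    and harmonic: "\<And>z. iter_dd [1, 1] u z + iter_dd [\<i>, \<i>] u z = 0"
    and bounded: "\<And>z. (iter_dd [1] u z)\<^sup>2 + (iter_dd [\<i>] u z)\<^sup>2 \<le> C"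
  shows "\<exists>c \<alpha> \<beta>. \<forall>z. u z = c + \<alpha> * Re z + \<beta> * Im z"
proof -
  define G where "G = (\<lambda>z. Complex (iter_dd [1] u z) (- iter_dd [\<i>] u z))"
  have "G holomorphic_on UNIV"
    unfolding G_def by (rule harmonic_gradient_holomorphic[OF u harmonic])
  moreover have "norm (G z) \<le> sqrt C" for z
    using bounded[of z] by (intro real_le_rsqrt) (simp add: G_def cmod_power2)
  then have "bounded (range G)"
    unfolding bounded_iff by blast
  ultimately obtain g where g: "\<And>z. G z = g"
    using Liouville_theorem unfolding constant_on_def by blast
  have "iter_dd [1] u z = Re g" "iter_dd [\<i>] u z = - Im g" for z
    using g[of z] by (auto simp: G_def)
  then show ?thesis
    using affine_if_constant_partials[OF u] by blast
qed

section \<open>Lebesgue measure on the plane\<close>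

lemma measurable_Complex_pair [measurable]:
  "(\<lambda>p::real \<times> real. Complex (fst p) (snd p)) \<in> borel_measurable lborel"
proof -
  have "continuous_on UNIV (\<lambda>p::real \<times> real. Complex (fst p) (snd p))"
    unfolding Complex_eq by (intro continuous_intros)
  then show ?thesis
    using borel_measurable_continuous_onI by simp
qed

lemma lborel_complex_eq_distr_pair:
  "distr (lborel :: (real \<times> real) measure) borel (\<lambda>p. Complex (fst p) (snd p)) = (lborel :: complex measure)"
proof (rule lborel_eqI[symmetric])
  fix l u :: complex
  assume le: "\<And>b. b \<in> Basis \<Longrightarrow> l \<bullet> b \<le> u \<bullet> b"
  have "Re l \<le> Re u" "Im l \<le> Im u"
    using le[of 1] le[of \<i>] by (auto simp: Basis_complex_def)
  moreover have "(\<lambda>p::real \<times> real. Complex (fst p) (snd p)) -` box l u = {Re l<..<Re u} \<times> {Im l<..<Im u}"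
    by (auto simp: box_def Basis_complex_def)
  ultimately show "emeasure (distr lborel borel (\<lambda>p. Complex (fst p) (snd p))) (box l u) = (\<Prod>b\<in>Basis. (u - l) \<bullet> b)"
    using measurable_Complex_pair
    by (simp add: emeasure_distr lborel_prod[symmetric] lborel.emeasure_pair_measure_Times
        Basis_complex_def ennreal_mult)
qed simp

lemma nn_integral_real_affine_density:
  fixes \<phi> :: "real \<Rightarrow> real"
  assumes [measurable]: "\<phi> \<in> borel_measurable borel" and "c \<noteq> 0"
  shows "(\<integral>\<^sup>+y. ennreal (\<phi> (t + c * y)) \<partial>lborel) = ennreal (1 / \<bar>c\<bar>) * (\<integral>\<^sup>+x. ennreal (\<phi> x) \<partial>lborel)"
proof -
  have "(\<integral>\<^sup>+y. ennreal (\<phi> (t + c * y)) \<partial>lborel)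
      = ennreal \<bar>1 / c\<bar> * (\<integral>\<^sup>+x. ennreal (\<phi> (t + c * (- t / c + 1 / c * x))) \<partial>lborel)"
    by (rule nn_integral_real_affine) (use assms in auto)
  also have "(\<lambda>x. t + c * (- t / c + 1 / c * x)) = (\<lambda>x. x)"
    using assms by (auto simp: field_simps)
  finally show ?thesis by simp
qed

lemma nn_integral_plane_affine_infinite:
  fixes \<phi> :: "real \<Rightarrow> real"
  assumes [measurable]: "\<phi> \<in> borel_measurable borel" and "\<And>t. 0 \<le> \<phi> t"
    and "(\<integral>\<^sup>+t. ennreal (\<phi> t) \<partial>lborel) = 1" and "K > 0" and "\<alpha> \<noteq> 0 \<or> \<beta> \<noteq> 0"
  shows "(\<integral>\<^sup>+z. ennreal (\<phi> (c + \<alpha> * Re z + \<beta> * Im z) * K) \<partial>lborel) = \<infinity>"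
proof -
  define g where "g = (\<lambda>p::real \<times> real. ennreal (\<phi> (c + \<alpha> * fst p + \<beta> * snd p) * K))"
  have "g \<in> borel_measurable (borel \<Otimes>\<^sub>M borel)"
    unfolding g_def by measurable
  moreover have "sets (lborel \<Otimes>\<^sub>M lborel) = sets ((borel :: real measure) \<Otimes>\<^sub>M (borel :: real measure))"
    by (rule sets_pair_measure_cong) simp_all
  ultimately have [measurable]: "g \<in> borel_measurable (lborel \<Otimes>\<^sub>M lborel)"
    using measurable_cong_sets[OF _ refl] by blast
  have line: "(\<integral>\<^sup>+y. ennreal (\<phi> (t + a * y) * K) \<partial>lborel) = ennreal (K / \<bar>a\<bar>)" if "a \<noteq> 0" for t a
  proof -
    have "(\<integral>\<^sup>+y. ennreal (\<phi> (t + a * y) * K) \<partial>lborel) = (\<integral>\<^sup>+y. ennreal (\<phi> (t + a * y)) * ennreal K \<partial>lborel)"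
      using assms(2,4) by (simp add: ennreal_mult)
    also have "\<dots> = (\<integral>\<^sup>+y. ennreal (\<phi> (t + a * y)) \<partial>lborel) * ennreal K"
      by (rule nn_integral_multc) measurable
    also have "\<dots> = ennreal (1 / \<bar>a\<bar>) * ennreal K"
      using nn_integral_real_affine_density[OF assms(1) that, of t] assms(3) by simp
    also have "\<dots> = ennreal (K / \<bar>a\<bar>)"
      using assms(4) by (simp add: ennreal_mult[symmetric])
    finally show ?thesis .
  qed
  have "(\<integral>\<^sup>+z. ennreal (\<phi> (c + \<alpha> * Re z + \<beta> * Im z) * K) \<partial>lborel) = (\<integral>\<^sup>+p. g p \<partial>(lborel \<Otimes>\<^sub>M lborel))"
    unfolding lborel_complex_eq_distr_pair[symmetric]
    by (subst nn_integral_distr) (simp_all add: lborel_prod g_def)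
  also have "\<dots> = \<infinity>"
  proof (cases "\<beta> = 0")
    case False
    have "(\<integral>\<^sup>+p. g p \<partial>(lborel \<Otimes>\<^sub>M lborel)) = (\<integral>\<^sup>+x. ennreal (K / \<bar>\<beta>\<bar>) \<partial>lborel)"
      using line[OF False] by (simp add: lborel.nn_integral_fst[symmetric] g_def)
    then show ?thesis using False \<open>K > 0\<close> by (simp add: ennreal_mult_top)
  next
    case True
    with assms(5) have "\<alpha> \<noteq> 0" by simp
    have "(\<integral>\<^sup>+p. g p \<partial>(lborel \<Otimes>\<^sub>M lborel)) = (\<integral>\<^sup>+y. ennreal (K / \<bar>\<alpha>\<bar>) \<partial>lborel)"
      using line[OF \<open>\<alpha> \<noteq> 0\<close>] True by (simp add: lborel_pair.nn_integral_snd[symmetric] g_def)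
    then show ?thesis using \<open>\<alpha> \<noteq> 0\<close> \<open>K > 0\<close> by (simp add: ennreal_mult_top)
  qed
  finally show ?thesis .
qed

lemma continuous_nonneg_nn_integral_eq_0:
  fixes f :: "'a::euclidean_space \<Rightarrow> real"
  assumes cont: "continuous_on UNIV f" and nonneg: "\<And>x. 0 \<le> f x"
    and "(\<integral>\<^sup>+x. ennreal (f x) \<partial>lborel) = 0"
  shows "f x = 0"
proof -
  have [measurable]: "f \<in> borel_measurable borel"
    using borel_measurable_continuous_onI[OF cont] .
  have "AE x in lborel. ennreal (f x) = 0"
    using assms(3) by (subst (asm) nn_integral_0_iff_AE) auto
  then have "AE x in lebesgue. x \<in> {x. f x = 0}"
    by (intro AE_completion) (auto simp: nonneg)
  moreover have "closed {x. f x = 0}"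
    using continuous_closed_preimage_constant[OF cont closed_UNIV] by simp
  ultimately show ?thesis
    using mem_closed_if_AE_lebesgue by blast
qed

locale admissible_structure =
  fixes Q :: "'a::euclidean_space set" and Lam R :: "'a \<Rightarrow> 'a"
    and J :: "'a \<Rightarrow> real \<Rightarrow> 'a \<times> real \<Rightarrow> 'a \<times> real"
  assumes contact: "contact_manifold Q Lam"
    and reeb: "reeb_field Q Lam R"
    and admissible: "lam_admissible Q Lam R J"
begin

lemma linear_J: "q \<in> Q \<Longrightarrow> linear (J q \<theta>)"
  using admissible unfolding lam_admissible_def by blast

lemma Lam_has_derivative: "q \<in> Q \<Longrightarrow> (Lam has_derivative frechet_derivative Lam (at q)) (at q)"
proof -
  assume "q \<in> Q"
  moreover obtain W where "Q \<subseteq> W" "cinf_on W Lam"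
    using contact unfolding contact_manifold_def by blast
  ultimately have "iter_dd [] Lam differentiable (at q)"
    unfolding cinf_on_def by blast
  then show ?thesis
    using frechet_derivative_works by auto
qed

lemma linear_frechet_derivative_Lam: "q \<in> Q \<Longrightarrow> linear (frechet_derivative Lam (at q))"
  using Lam_has_derivative has_derivative_linear by blast

lemma dlam_uminus_left: "q \<in> Q \<Longrightarrow> dlam Lam q (- a) b = - dlam Lam q a b"
  using linear_frechet_derivative_Lam by (simp add: dlam_def linear_neg)

lemma dlam_uminus_right: "q \<in> Q \<Longrightarrow> dlam Lam q a (- b) = - dlam Lam q a b"
  using linear_frechet_derivative_Lam by (simp add: dlam_def linear_neg)

lemma dlam_proj_xi:
  assumes "q \<in> Q" and "a \<in> tangent_space Q q" and "b \<in> tangent_space Q q"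
  shows "dlam Lam q (proj_xi Lam R q a) (proj_xi Lam R q b) = dlam Lam q a b"
proof -
  define DL where "DL = frechet_derivative Lam (at q)"
  have DL: "linear DL" using linear_frechet_derivative_Lam[OF assms(1)] by (simp add: DL_def)
  have "DL (R q) \<bullet> v = DL v \<bullet> R q" if "v \<in> tangent_space Q q" for v
    using reeb assms(1) that unfolding reeb_field_def dlam_def DL_def by auto
  with assms(2,3) show ?thesis
    unfolding dlam_def proj_xi_def DL_def[symmetric]
    by (simp add: linear_diff[OF DL] linear_cmul[OF DL] algebra_simps)
qed

lemma Lam_proj_xi: "q \<in> Q \<Longrightarrow> Lam q \<bullet> proj_xi Lam R q v = 0"
  using reeb unfolding reeb_field_def proj_xi_def by (simp add: inner_diff_right)

lemma proj_xi_idem: "q \<in> Q \<Longrightarrow> proj_xi Lam R q (proj_xi Lam R q v) = proj_xi Lam R q v"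
  using Lam_proj_xi by (simp add: proj_xi_def[of _ _ _ "proj_xi Lam R q v"])

lemma gnorm2_eq_proj_xi:
  "q \<in> Q \<Longrightarrow> gnorm2 Lam R J q \<theta> v = gnorm2 Lam R J q \<theta> (proj_xi Lam R q v) + (Lam q \<bullet> v)\<^sup>2"
  by (simp add: gnorm2_def proj_xi_idem Lam_proj_xi)

lemma gnorm2_proj_xi: "q \<in> Q \<Longrightarrow> gnorm2 Lam R J q \<theta> (proj_xi Lam R q v)
    = dlam Lam q (proj_xi Lam R q v) (fst (J q \<theta> (proj_xi Lam R q v, 0)))"
  by (simp add: gnorm2_def proj_xi_idem Lam_proj_xi)

lemma J_Reeb: "q \<in> Q \<Longrightarrow> J q \<theta> (R q, 0) = - (0, 1)"
proof -
  assume q: "q \<in> Q"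
  then have "(0, 1) \<in> tangent_space Q q \<times> UNIV" by (simp add: zero_in_tangent_space)
  with q admissible have "J q \<theta> (J q \<theta> (0, 1)) = - (0, 1)" "J q \<theta> (0, 1) = (R q, 0)"
    unfolding lam_admissible_def by blast+
  then show ?thesis by simp
qed

lemma fst_J_proj_xi: "q \<in> Q \<Longrightarrow> fst (J q \<theta> (proj_xi Lam R q v, 0)) = fst (J q \<theta> (v, 0))"
proof -
  assume q: "q \<in> Q"
  have pair: "(proj_xi Lam R q v, 0) = (v, 0) - (Lam q \<bullet> v) *\<^sub>R (R q, 0)"
    by (simp add: proj_xi_def)
  have "J q \<theta> (proj_xi Lam R q v, 0) = J q \<theta> (v, 0) - (Lam q \<bullet> v) *\<^sub>R J q \<theta> (R q, 0)"
    unfolding pair by (simp only: linear_diff[OF linear_J[OF q]] linear_cmul[OF linear_J[OF q]])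
  then show ?thesis
    using J_Reeb[OF q] by simp
qed

lemma fst_J_tangent:
  assumes "q \<in> Q" and "v \<in> tangent_space Q q"
  shows "fst (J q \<theta> (v, 0)) \<in> tangent_space Q q"
proof -
  have "(v, 0) \<in> tangent_space Q q \<times> UNIV"
    using assms(2) by simp
  with assms(1) admissible have "J q \<theta> (v, 0) \<in> tangent_space Q q \<times> UNIV"
    unfolding lam_admissible_def by blast
  then show ?thesis
    by (simp add: mem_Times_iff)
qed

lemma fst_J_uminus: "q \<in> Q \<Longrightarrow> fst (J q \<theta> (- v, 0)) = - fst (J q \<theta> (v, 0))"
  using linear_neg[OF linear_J, of q \<theta> "(v, 0)"] by simp

lemma gnorm2_uminus: "q \<in> Q \<Longrightarrow> gnorm2 Lam R J q \<theta> (- v) = gnorm2 Lam R J q \<theta> v"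
proof -
  assume q: "q \<in> Q"
  have "proj_xi Lam R q (- v) = - proj_xi Lam R q v"
    by (simp add: proj_xi_def)
  then show ?thesis
    by (simp add: gnorm2_def fst_J_uminus[OF q] dlam_uminus_left[OF q] dlam_uminus_right[OF q])
qed

lemma gnorm2_xi_nonneg:
  assumes "q \<in> Q" and "v \<in> xi Q Lam q"
  shows "0 \<le> gnorm2 Lam R J q \<theta> v" and "gnorm2 Lam R J q \<theta> v = 0 \<Longrightarrow> v = 0"
proof -
  have "proj_xi Lam R q v = v"
    using assms(2) by (simp add: xi_def proj_xi_def)
  then have "gnorm2 Lam R J q \<theta> v = dlam Lam q v (fst (J q \<theta> (v, 0)))"
    using gnorm2_proj_xi[OF assms(1), of \<theta> v] by simp
  moreover have "v \<noteq> 0 \<Longrightarrow> 0 < dlam Lam q v (fst (J q \<theta> (v, 0)))"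
    using admissible assms unfolding lam_admissible_def by blast
  moreover have "dlam Lam q 0 b = 0" for b
    using linear_frechet_derivative_Lam[OF assms(1)] by (simp add: dlam_def linear_0)
  ultimately show "0 \<le> gnorm2 Lam R J q \<theta> v" "gnorm2 Lam R J q \<theta> v = 0 \<Longrightarrow> v = 0"
    by (cases "v = 0"; force)+
qed

end

locale lcs_instanton_on = admissible_structure Q Lam R J
  for Q :: "'a::euclidean_space set" and Lam R J +
  fixes w :: "complex \<Rightarrow> 'a" and ft :: "complex \<Rightarrow> real"
  assumes instanton: "lcs_instanton Q Lam R J w ft"
begin

abbreviation w_x :: "complex \<Rightarrow> 'a" where "w_x z \<equiv> frechet_derivative w (at z) 1"
abbreviation w_y :: "complex \<Rightarrow> 'a" where "w_y z \<equiv> frechet_derivative w (at z) \<i>"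

lemma w_in_Q: "w z \<in> Q"
  and cinf_w: "cinf_on UNIV w"
  and cinf_ft: "cinf_on UNIV ft"
  using instanton unfolding lcs_instanton_def by blast+

lemma w_has_derivative: "(w has_derivative frechet_derivative w (at z)) (at z)"
  using cinf_on_UNIV_has_derivative[OF cinf_w, of "[]"] by simp

lemma linear_dw: "linear (frechet_derivative w (at z))"
  using has_derivative_linear[OF w_has_derivative] .

lemma cauchy_riemann: "proj_xi Lam R (w z) (frechet_derivative w (at z) v)
    + fst (J (w z) (ft z) (proj_xi Lam R (w z) (frechet_derivative w (at z) (\<i> * v)), 0)) = 0"
  and Lam_dw: "Lam (w z) \<bullet> frechet_derivative w (at z) (\<i> * v) = frechet_derivative ft (at z) v"
  using instanton unfolding lcs_instanton_def by blast+

lemma proj_w_x: "proj_xi Lam R (w z) (w_x z) = - fst (J (w z) (ft z) (w_y z, 0))"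
  using cauchy_riemann[of z 1] by (simp add: fst_J_proj_xi[OF w_in_Q] eq_neg_iff_add_eq_0)

lemma dw_i_i: "frechet_derivative w (at z) (\<i> * \<i>) = - w_x z"
  using linear_neg[OF linear_dw, of z 1] by simp

lemma proj_w_y: "proj_xi Lam R (w z) (w_y z) = fst (J (w z) (ft z) (w_x z, 0))"
  using cauchy_riemann[of z \<i>] unfolding dw_i_i
  by (simp add: fst_J_proj_xi[OF w_in_Q] fst_J_uminus[OF w_in_Q])

text \<open>\<open>tangent_space\<close> is not known to be closed under linear combinations, so tangency of
  \<open>\<pi> w\<^sub>x\<close> is read off the Cauchy-Riemann equation rather than from \<open>w\<^sub>x - \<lambda>(w\<^sub>x) R\<close>.\<close>
lemma proj_w_x_in_xi: "- proj_xi Lam R (w z) (w_x z) \<in> xi Q Lam (w z)"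
proof -
  have "- proj_xi Lam R (w z) (w_x z) \<in> tangent_space Q (w z)"
    unfolding proj_w_x minus_minus
    by (intro fst_J_tangent w_in_Q frechet_derivative_in_tangent_space[OF cinf_w w_in_Q])
  then show ?thesis
    unfolding xi_def using Lam_proj_xi[OF w_in_Q] by simp
qed

lemma proj_w_y_in_xi: "proj_xi Lam R (w z) (w_y z) \<in> xi Q Lam (w z)"
proof -
  have "proj_xi Lam R (w z) (w_y z) \<in> tangent_space Q (w z)"
    unfolding proj_w_y
    by (intro fst_J_tangent w_in_Q frechet_derivative_in_tangent_space[OF cinf_w w_in_Q])
  then show ?thesis
    unfolding xi_def using Lam_proj_xi[OF w_in_Q] by simp
qed

lemma gnorm2_proj_w_nonneg:
  "0 \<le> gnorm2 Lam R J (w z) (ft z) (proj_xi Lam R (w z) (w_x z))"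
  "0 \<le> gnorm2 Lam R J (w z) (ft z) (proj_xi Lam R (w z) (w_y z))"
  using gnorm2_xi_nonneg(1)[OF w_in_Q proj_w_x_in_xi] gnorm2_xi_nonneg(1)[OF w_in_Q proj_w_y_in_xi]
  by (simp_all add: gnorm2_uminus[OF w_in_Q])

lemma pi_dw_norm2_nonneg: "0 \<le> pi_dw_norm2 Lam R J w ft z"
  unfolding pi_dw_norm2_def using gnorm2_proj_w_nonneg by simp

lemma pi_dw_norm2_eq_0_imp:
  assumes "pi_dw_norm2 Lam R J w ft z = 0"
  shows "proj_xi Lam R (w z) (w_x z) = 0" and "proj_xi Lam R (w z) (w_y z) = 0"
proof -
  have "gnorm2 Lam R J (w z) (ft z) (- proj_xi Lam R (w z) (w_x z)) = 0"
    "gnorm2 Lam R J (w z) (ft z) (proj_xi Lam R (w z) (w_y z)) = 0"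
    using assms gnorm2_proj_w_nonneg[of z] by (simp_all add: pi_dw_norm2_def gnorm2_uminus[OF w_in_Q])
  then show "proj_xi Lam R (w z) (w_x z) = 0" "proj_xi Lam R (w z) (w_y z) = 0"
    using gnorm2_xi_nonneg(2)[OF w_in_Q proj_w_x_in_xi] gnorm2_xi_nonneg(2)[OF w_in_Q proj_w_y_in_xi]
    by simp_all
qed

lemma pi_dw_norm2_eq_dlam: "pi_dw_norm2 Lam R J w ft z = 2 * dlam Lam (w z) (w_x z) (w_y z)"
proof -
  define X Y where "X = proj_xi Lam R (w z) (w_x z)" and "Y = proj_xi Lam R (w z) (w_y z)"
  have JX: "fst (J (w z) (ft z) (X, 0)) = Y" and JY: "fst (J (w z) (ft z) (Y, 0)) = - X"
    unfolding X_def Y_def fst_J_proj_xi[OF w_in_Q] by (simp_all add: proj_w_x proj_w_y)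
  have "gnorm2 Lam R J (w z) (ft z) X = dlam Lam (w z) X Y"
    unfolding X_def gnorm2_proj_xi[OF w_in_Q] by (fold X_def) (simp only: JX)
  moreover have "gnorm2 Lam R J (w z) (ft z) Y = dlam Lam (w z) X Y"
    unfolding Y_def gnorm2_proj_xi[OF w_in_Q] by (fold Y_def) (simp add: JY dlam_uminus_right[OF w_in_Q], simp add: dlam_def)
  moreover have "dlam Lam (w z) X Y = dlam Lam (w z) (w_x z) (w_y z)"
    unfolding X_def Y_def
    by (intro dlam_proj_xi w_in_Q frechet_derivative_in_tangent_space[OF cinf_w w_in_Q])
  ultimately show ?thesis
    by (simp add: pi_dw_norm2_def X_def Y_def)
qed

lemma Lam_dw_bound: "(Lam (w z) \<bullet> w_x z)\<^sup>2 + (Lam (w z) \<bullet> w_y z)\<^sup>2 \<le> dw_norm2 Lam R J w ft z"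
  using gnorm2_proj_w_nonneg[of z]
  unfolding dw_norm2_def gnorm2_eq_proj_xi[OF w_in_Q[of z], of "ft z" "w_x z"]
    gnorm2_eq_proj_xi[OF w_in_Q[of z], of "ft z" "w_y z"]
  by simp

lemma ft_x: "frechet_derivative ft (at z) 1 = Lam (w z) \<bullet> w_y z"
  using Lam_dw[of z 1] by simp

lemma ft_y: "frechet_derivative ft (at z) \<i> = - (Lam (w z) \<bullet> w_x z)"
  using Lam_dw[of z \<i>] unfolding dw_i_i by simp

lemma has_derivative_Lam_w_inner:
  assumes "(H has_derivative H') (at z)"
  shows "((\<lambda>z. Lam (w z) \<bullet> H z) has_derivative
    (\<lambda>h. Lam (w z) \<bullet> H' h + frechet_derivative Lam (at (w z)) (frechet_derivative w (at z) h) \<bullet> H z)) (at z)"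
proof -
  have "((\<lambda>z. Lam (w z)) has_derivative (\<lambda>h. frechet_derivative Lam (at (w z)) (frechet_derivative w (at z) h))) (at z)"
    using has_derivative_compose[OF w_has_derivative Lam_has_derivative[OF w_in_Q]] .
  from has_derivative_inner[OF this assms] show ?thesis
    by (simp add: add.commute)
qed

lemma laplacian_ft: "iter_dd [1, 1] ft z + iter_dd [\<i>, \<i>] ft z = dlam Lam (w z) (w_x z) (w_y z)"
proof -
  define DL where "DL = frechet_derivative Lam (at (w z))"
  have "iter_dd [1] ft = (\<lambda>z. Lam (w z) \<bullet> iter_dd [\<i>] w z)"
    by (simp add: fun_eq_iff ft_x)
  then have xx: "iter_dd [1, 1] ft z = Lam (w z) \<bullet> iter_dd [1, \<i>] w z + DL (w_x z) \<bullet> w_y z"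
    using frechet_derivative_eqI[OF has_derivative_Lam_w_inner[OF cinf_on_UNIV_has_derivative[OF cinf_w, of "[\<i>]"]]]
    by (simp add: DL_def)
  have "iter_dd [\<i>] ft = (\<lambda>z. - (Lam (w z) \<bullet> iter_dd [1] w z))"
    by (simp add: fun_eq_iff ft_y)
  then have yy: "iter_dd [\<i>, \<i>] ft z = - (Lam (w z) \<bullet> iter_dd [\<i>, 1] w z + DL (w_y z) \<bullet> w_x z)"
    using frechet_derivative_eqI[OF has_derivative_minus[OF has_derivative_Lam_w_inner[OF cinf_on_UNIV_has_derivative[OF cinf_w, of "[1]"]]]]
    by (simp add: DL_def)
  show ?thesis
    unfolding xx yy iter_dd_swap[OF cinf_w, of 1 \<i>] by (simp add: dlam_def DL_def)
qed

lemma pi_dw_norm2_continuous: "continuous_on UNIV (pi_dw_norm2 Lam R J w ft)"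
proof -
  have eq: "pi_dw_norm2 Lam R J w ft = (\<lambda>z. 2 * (iter_dd [1, 1] ft z + iter_dd [\<i>, \<i>] ft z))"
    unfolding fun_eq_iff pi_dw_norm2_eq_dlam laplacian_ft by simp
  have "isCont (iter_dd vs ft) z" for vs z
    using cinf_ft unfolding cinf_on_def by (blast intro: differentiable_imp_continuous_within)
  then have "isCont (\<lambda>z. 2 * (iter_dd [1, 1] ft z + iter_dd [\<i>, \<i>] ft z)) z" for z
    by (intro continuous_intros)
  then show ?thesis
    unfolding eq by (intro continuous_at_imp_continuous_on ballI)
qed

lemma E_pi_eq_0_imp:
  assumes "E_pi Lam R J w ft = 0"
  shows "pi_dw_norm2 Lam R J w ft z = 0"
proof -
  have "continuous_on UNIV (\<lambda>z. pi_dw_norm2 Lam R J w ft z / 2)"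
    by (rule continuous_on_divide[OF pi_dw_norm2_continuous continuous_on_const]) simp
  moreover have "0 \<le> pi_dw_norm2 Lam R J w ft z / 2" for z
    using pi_dw_norm2_nonneg by simp
  moreover have "(\<integral>\<^sup>+z. ennreal (pi_dw_norm2 Lam R J w ft z / 2) \<partial>lborel) = 0"
    using assms unfolding E_pi_def .
  ultimately have "pi_dw_norm2 Lam R J w ft z / 2 = 0"
    by (rule continuous_nonneg_nn_integral_eq_0)
  then show ?thesis
    by simp
qed

lemma ft_affine:
  assumes "E_pi Lam R J w ft = 0" and "\<And>z. dw_norm2 Lam R J w ft z \<le> C"
  shows "\<exists>c \<alpha> \<beta>. \<forall>z. ft z = c + \<alpha> * Re z + \<beta> * Im z"
proof (rule harmonic_bounded_gradient_affine[OF cinf_ft])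
  show "iter_dd [1, 1] ft z + iter_dd [\<i>, \<i>] ft z = 0" for z
  proof -
    have "dlam Lam (w z) (w_x z) (w_y z) = 0"
      using E_pi_eq_0_imp[OF assms(1), of z] by (simp add: pi_dw_norm2_eq_dlam)
    then show ?thesis
      by (simp only: laplacian_ft)
  qed
  show "(iter_dd [1] ft z)\<^sup>2 + (iter_dd [\<i>] ft z)\<^sup>2 \<le> C" for z
    using Lam_dw_bound[of z] assms(2)[of z] by (simp add: ft_x ft_y add.commute)
qed

lemma vert_density_eq: "vert_density Lam w ft z = (frechet_derivative ft (at z) 1)\<^sup>2 + (frechet_derivative ft (at z) \<i>)\<^sup>2"
  by (simp add: vert_density_def ft_x ft_y power2_eq_square)

lemma E_perp_affine_infinite:
  assumes ft: "\<And>z. ft z = c + \<alpha> * Re z + \<beta> * Im z" and "\<alpha> \<noteq> 0 \<or> \<beta> \<noteq> 0"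
  shows "E_perp Lam w ft = \<infinity>"
proof -
  have "(ft has_derivative (\<lambda>h. \<alpha> * Re h + \<beta> * Im h)) (at z)" for z
    unfolding ft[abs_def] by (auto intro!: derivative_eq_intros)
  then have "frechet_derivative ft (at z) = (\<lambda>h. \<alpha> * Re h + \<beta> * Im h)" for z
    by (rule frechet_derivative_eqI)
  then have density: "vert_density Lam w ft z = \<alpha>\<^sup>2 + \<beta>\<^sup>2" for z
    by (simp add: vert_density_eq)
  obtain \<phi> where \<phi>: "\<phi> \<in> test_fns"
    using test_fns_nonempty by blast
  then have "cinf_on UNIV \<phi>" and nonneg: "\<And>t. 0 \<le> \<phi> t" and "(\<phi> has_integral 1) UNIV"
    unfolding test_fns_def by auto
  then have "continuous_on UNIV \<phi>"
    by (intro has_derivative_continuous_on) (use cinf_on_UNIV_has_derivative[of \<phi> "[]"] in simp)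
  then have "\<phi> \<in> borel_measurable borel"
    by (rule borel_measurable_continuous_onI)
  moreover have "(\<integral>\<^sup>+t. ennreal (\<phi> t) \<partial>lborel) = 1"
    using nn_integral_has_integral_lebesgue'[OF nonneg \<open>(\<phi> has_integral 1) UNIV\<close>] by simp
  moreover have "0 < \<alpha>\<^sup>2 + \<beta>\<^sup>2"
    using assms(2) by (simp add: sum_power2_gt_zero_iff)
  ultimately have "(\<integral>\<^sup>+z. ennreal (\<phi> (ft z) * vert_density Lam w ft z) \<partial>lborel) = \<infinity>"
    unfolding ft density by (rule nn_integral_plane_affine_infinite[OF _ nonneg _ _ assms(2)])
  moreover have "(\<integral>\<^sup>+z. ennreal (\<phi> (ft z) * vert_density Lam w ft z) \<partial>lborel) \<le> E_perp Lam w ft"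
    unfolding E_perp_def by (rule SUP_upper[OF \<phi>])
  ultimately show ?thesis
    by (simp add: top_unique)
qed

lemma w_constant:
  assumes "E_pi Lam R J w ft = 0" and "\<And>z. frechet_derivative ft (at z) = (\<lambda>_. 0)"
  shows "\<exists>q. \<forall>z. w z = q"
proof -
  have "frechet_derivative w (at z) = (\<lambda>_. 0)" for z
  proof
    fix h
    have split: "v = proj_xi Lam R (w z) v + (Lam (w z) \<bullet> v) *\<^sub>R R (w z)" for v
      by (simp add: proj_xi_def)
    have "Lam (w z) \<bullet> w_x z = 0" "Lam (w z) \<bullet> w_y z = 0"
      using ft_x[of z] ft_y[of z] assms(2) by simp_all
    then have "w_x z = 0" "w_y z = 0"
      using split[of "w_x z"] split[of "w_y z"]
        pi_dw_norm2_eq_0_imp[OF E_pi_eq_0_imp[OF assms(1)]] by simp_all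
    then show "frechet_derivative w (at z) h = 0"
      using linear_complex_decompose[OF linear_dw[of z], of h] by simp
  qed
  then have "(w has_derivative (\<lambda>_. 0)) (at z within UNIV)" for z
    using cinf_on_UNIV_has_derivative[OF cinf_w, of "[]" z] by simp
  then show ?thesis
    using has_derivative_zero_constant[OF convex_UNIV, of w] by auto
qed

end

theorem mainTheorem5:
  fixes Q :: "'a::euclidean_space set" and Lam R :: "'a \<Rightarrow> 'a"
    and J :: "'a \<Rightarrow> real \<Rightarrow> 'a \<times> real \<Rightarrow> 'a \<times> real"
    and w :: "complex \<Rightarrow> 'a" and f :: "complex \<Rightarrow> complex" and ft :: "complex \<Rightarrow> real"
  assumes "contact_manifold Q Lam"
    and "reeb_field Q Lam R"
    and "lam_admissible Q Lam R J"
    and "\<forall>z. f z = cis (2 * pi * ft z)"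
    and "lcs_instanton Q Lam R J w ft"
    and "\<exists>C. \<forall>z. dw_norm2 Lam R J w ft z \<le> C"
    and "E_pi Lam R J w ft = 0"
    and "E_perp Lam w ft < \<infinity>"
  shows "\<exists>q c. \<forall>z. w z = q \<and> f z = c"
proof -
  interpret lcs_instanton_on Q Lam R J w ft
    using assms(1-3,5) by unfold_locales
  obtain C where "\<And>z. dw_norm2 Lam R J w ft z \<le> C"
    using assms(6) by blast
  then obtain c \<alpha> \<beta> where ft: "\<And>z. ft z = c + \<alpha> * Re z + \<beta> * Im z"
    using ft_affine[OF assms(7)] by blast
  have "\<alpha> = 0 \<and> \<beta> = 0"
  proof (rule ccontr)
    assume "\<not> (\<alpha> = 0 \<and> \<beta> = 0)"
    then have "E_perp Lam w ft = \<infinity>"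
      using E_perp_affine_infinite[OF ft] by blast
    with assms(8) show False
      by simp
  qed
  with ft have ft_const: "ft = (\<lambda>_. c)"
    by auto
  then have "frechet_derivative ft (at z) = (\<lambda>_. 0)" for z
    by (simp add: frechet_derivative_eqI)
  then obtain q where "\<forall>z. w z = q"
    using w_constant[OF assms(7)] by blast
  with assms(4) ft_const show ?thesis
    by auto
qed

end
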